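(* For any $\alpha>0$ there exists $\beta_0>0$ such that the following holds for all $0<\beta\le\beta_0$. Let $\Lambda_1,\dots,\Lambda_m\subseteq\mathbb{R}^d$ be hyperplanes, let $b\in\bigcap_{i\in[m]}\Lambda_i$, and let $j$ be the smallest integer for which the set $V=\{v_1,\dots,v_m\}$ of their unit normal vectors is $(j,\beta^j)$-flat with respect to some $j$-plane $\Lambda_B$ with $b\in\Lambda_B$. If for some point $p$ the angle between $v=b-p$ and $\Lambda_i$ is at most $\beta^d$ for every $i\in[m]$, then the angle between $v$ and $\Lambda:=\Lambda_B(b)^{\perp}$ is at most $\alpha$.
   Context: A $j$-plane is an affine subspace of dimension $j$. The angle between a vector $v$ and a plane $\Lambda$ is the infimum of the angles between $v$ and vectors $w\in\Lambda-\Lambda$. A set of vectors $V$ is $(j,\alpha)$-flat with respect to a $j$-plane $\Lambda$ if every $v\in V$ makes angle at most $\alpha$ with $\Lambda$. For a $j$-plane $\gamma\subseteq\mathbb{R}^{d}$ and a point $p\in\gamma$, $\gamma(p)^{\perp}$ denotes the $(d-j)$-plane through $p$ orthogonal to $\gamma$. *)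

theory Defs
  imports "HOL-Analysis.Analysis"
begin

text \<open>Angle between two vectors (arccos convention; a zero vector gives pi/2).\<close>
definition vec_angle :: "'a::real_inner \<Rightarrow> 'a \<Rightarrow> real" where
  "vec_angle v w = arccos ((v \<bullet> w) / (norm v * norm w))"

definition diffs :: "'a::real_vector set \<Rightarrow> 'a set" where
  "diffs L = {x - y | x y. x \<in> L \<and> y \<in> L}"

definition plane_angle :: "'a::real_inner \<Rightarrow> 'a set \<Rightarrow> real" where
  "plane_angle v L = Inf (vec_angle v ` diffs L)"

definition is_plane :: "nat \<Rightarrow> 'a::euclidean_space set \<Rightarrow> bool" where
  "is_plane j L \<longleftrightarrow> affine L \<and> L \<noteq> {} \<and> aff_dim L = int j"

definition flat_wrt :: "nat \<Rightarrow> real \<Rightarrow> 'a::euclidean_space set \<Rightarrow> 'a set \<Rightarrow> bool" where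
  "flat_wrt j \<alpha> V L \<longleftrightarrow> is_plane j L \<and> (\<forall>v\<in>V. plane_angle v L \<le> \<alpha>)"

definition orth_plane :: "'a::euclidean_space set \<Rightarrow> 'a \<Rightarrow> 'a set" where
  "orth_plane L p = {x. \<forall>w\<in>diffs L. (x - p) \<bullet> w = 0}"

definition unit_normal :: "'a::euclidean_space \<Rightarrow> 'a set \<Rightarrow> bool" where
  "unit_normal n H \<longleftrightarrow> norm n = 1 \<and> (\<forall>w\<in>diffs H. n \<bullet> w = 0)"

end

theory Submission
  imports Defs
begin

(* Write u = b - p = y + z with y in the direction space S of LB and z orthogonal to S; the
   direction space of orth_plane LB b is the orthogonal complement of S.  If |y| <= sin theta |u|,
   then u makes angle at most theta with that plane.  Otherwise u is tilted towards S.  Every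
   normal v is nearly orthogonal to u (as u is nearly parallel to each hyperplane) and nearly in S
   (by flatness); since u . v = c |y|^2 + z . r for v = q + c y + r with q in S orthogonal to y and
   r orthogonal to S, the y-component c y of v is small too.  So the normals are
   (j - 1, beta^(j - 1))-flat with respect to the slice of LB through b orthogonal to y,
   contradicting the minimality of j. *)

lemma half_le_sin:
  fixes x :: real
  assumes "0 \<le> x" "x \<le> 1"
  shows "x / 2 \<le> sin x"
proof -
  have "\<bar>sin x - (\<Sum>m<3. sin_coeff m * x ^ m)\<bar> \<le> inverse (fact 3) * \<bar>x\<bar> ^ 3"
    by (rule Maclaurin_sin_bound)
  moreover have "(\<Sum>m<3. sin_coeff m * x ^ m) = x"
    by (simp add: numeral_3_eq_3 sin_coeff_def)
  moreover have "inverse (fact 3) * \<bar>x\<bar> ^ 3 = x ^ 3 / 6"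
    using assms by (simp add: numeral_3_eq_3)
  moreover have "x ^ 3 \<le> x"
    using assms mult_left_le[of "x * x" x] mult_le_one[of x x] by (simp add: power3_eq_cube)
  ultimately show ?thesis
    using assms by linarith
qed

lemma inner_div_norms_bounds:
  fixes v w :: "'a::real_inner"
  shows "- 1 \<le> (v \<bullet> w) / (norm v * norm w)" "(v \<bullet> w) / (norm v * norm w) \<le> 1"
proof -
  have "\<bar>(v \<bullet> w) / (norm v * norm w)\<bar> \<le> 1"
    by (cases "v = 0 \<or> w = 0") (auto simp: divide_le_eq_1 Cauchy_Schwarz_ineq2)
  then show "- 1 \<le> (v \<bullet> w) / (norm v * norm w)" "(v \<bullet> w) / (norm v * norm w) \<le> 1"
    unfolding abs_le_iff by linarith+
qed

lemma vec_angle_nonneg: "0 \<le> vec_angle v w"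
  unfolding vec_angle_def using inner_div_norms_bounds[of v w] by (intro arccos_lbound)

lemma diffs_affine:
  assumes "affine L" "a \<in> L"
  shows "diffs L = (\<lambda>x. x - a) ` L"
proof
  show "diffs L \<subseteq> (\<lambda>x. x - a) ` L"
  proof
    fix w assume "w \<in> diffs L"
    then obtain x y where "w = x - y" "x \<in> L" "y \<in> L"
      unfolding diffs_def by blast
    moreover have "x - y + a \<in> L"
      using mem_affine_3_minus[OF assms \<open>x \<in> L\<close> \<open>y \<in> L\<close>, of 1]
      by (simp add: algebra_simps)
    ultimately show "w \<in> (\<lambda>x. x - a) ` L"
      by (force intro: image_eqI[of _ _ "x - y + a"])
  qed
qed (use assms in \<open>auto simp: diffs_def\<close>)

lemma subspace_diffs:
  assumes "affine L" "L \<noteq> {}"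
  shows "subspace (diffs L)"
  using assms diffs_affine affine_diffs_subspace_subtract by fastforce

lemma orthogonal_decomp_diffs:
  fixes x :: "'a::euclidean_space"
  assumes "affine L" "L \<noteq> {}"
  obtains y z where "x = y + z" "y \<in> diffs L" "\<forall>w\<in>diffs L. z \<bullet> w = 0"
proof -
  have span: "span (diffs L) = diffs L"
    by (rule span_eq_iff[THEN iffD2, OF subspace_diffs[OF assms]])
  obtain y z where "y \<in> span (diffs L)" "\<And>w. w \<in> span (diffs L) \<Longrightarrow> orthogonal z w" "x = y + z"
    using orthogonal_subspace_decomp_exists[of "diffs L" x] by metis
  then show thesis
    using that unfolding span orthogonal_def by blast
qed

lemma plane_angle_eq_arccos:
  fixes x y z :: "'a::real_inner"
  assumes dec: "x = y + z" "y \<in> diffs L" "\<forall>w\<in>diffs L. z \<bullet> w = 0" and "x \<noteq> 0"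
  shows "plane_angle x L = arccos (norm y / norm x)"
proof -
  have xw: "x \<bullet> w = y \<bullet> w" if "w \<in> diffs L" for w
    using dec that by (simp add: inner_add_left)
  have "norm y * norm y \<le> norm x * norm y"
    using xw[OF dec(2)] norm_cauchy_schwarz[of x y] by (simp add: dot_square_norm power2_eq_square)
  then have t1: "norm y / norm x \<le> 1"
    using \<open>x \<noteq> 0\<close> by (cases "y = 0") auto
  have lower: "arccos (norm y / norm x) \<le> vec_angle x w" if "w \<in> diffs L" for w
  proof -
    have "(x \<bullet> w) / (norm x * norm w) \<le> norm y / norm x"
    proof (cases "w = 0")
      case False
      have "x \<bullet> w \<le> norm y * norm w"
        using xw[OF that] norm_cauchy_schwarz[of y w] by simp
      then show ?thesis
        using False \<open>x \<noteq> 0\<close> by (simp add: divide_le_eq field_simps)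
    qed simp
    then show ?thesis
      unfolding vec_angle_def using inner_div_norms_bounds[of x w] t1
      by (intro arccos_le_arccos) auto
  qed
  have attained: "vec_angle x y = arccos (norm y / norm x)"
  proof (cases "y = 0")
    case False
    have "x \<bullet> y = norm y * norm y"
      using xw[OF dec(2)] by (simp add: dot_square_norm power2_eq_square)
    then show ?thesis
      using False by (simp add: vec_angle_def)
  qed (simp add: vec_angle_def)
  have bdd: "bdd_below (vec_angle x ` diffs L)"
    by (intro bdd_belowI[of _ 0]) (auto simp: vec_angle_nonneg)
  have "plane_angle x L \<le> arccos (norm y / norm x)"
    unfolding plane_angle_def attained[symmetric] using cInf_lower[OF imageI[OF dec(2)] bdd] .
  moreover have "arccos (norm y / norm x) \<le> plane_angle x L"
    unfolding plane_angle_def using dec(2) lower by (intro cInf_greatest) auto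
  ultimately show ?thesis
    by (rule antisym)
qed

lemma plane_angle_le_iff:
  fixes x y z :: "'a::real_inner"
  assumes dec: "x = y + z" "y \<in> diffs L" "\<forall>w\<in>diffs L. z \<bullet> w = 0" and "x \<noteq> 0"
    and "0 \<le> \<theta>" "\<theta> \<le> pi / 2"
  shows "plane_angle x L \<le> \<theta> \<longleftrightarrow> norm z \<le> sin \<theta> * norm x"
proof -
  define t where "t = norm y / norm x"
  have "y \<bullet> z = 0"
    using dec(2,3) inner_commute[of y z] by simp
  then have pyth: "norm x ^ 2 = norm y ^ 2 + norm z ^ 2"
    unfolding dec(1) by (intro norm_add_Pythagorean) (simp add: orthogonal_def)
  then have "norm y \<le> norm x"
    by (metis le_add_same_cancel1 norm_ge_zero power2_le_imp_le zero_le_power2)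
  then have t: "0 \<le> t" "t \<le> 1"
    using \<open>x \<noteq> 0\<close> unfolding t_def by auto
  have "1 - t ^ 2 = (norm x ^ 2 - norm y ^ 2) / norm x ^ 2"
    using \<open>x \<noteq> 0\<close> by (simp add: t_def power_divide diff_divide_distrib)
  also have "\<dots> = (norm z / norm x) ^ 2"
    using pyth by (simp add: power_divide)
  finally have sin_angle: "sin (arccos t) = norm z / norm x"
    using t by (simp add: sin_arccos)
  have "plane_angle x L \<le> \<theta> \<longleftrightarrow> sin (arccos t) \<le> sin \<theta>"
    unfolding plane_angle_eq_arccos[OF assms(1-4)] t_def[symmetric]
    using t \<open>0 \<le> \<theta>\<close> \<open>\<theta> \<le> pi / 2\<close> arccos_lbound[of t] arccos_le_pi2[of t]
    by (subst sin_mono_le_eq) auto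
  also have "\<dots> \<longleftrightarrow> norm z \<le> sin \<theta> * norm x"
    using \<open>x \<noteq> 0\<close> by (simp add: sin_angle divide_le_eq)
  finally show ?thesis .
qed

lemma norm_orthogonal_component_le:
  fixes x y z :: "'a::real_inner"
  assumes "x = y + z" "y \<in> diffs L" "\<forall>w\<in>diffs L. z \<bullet> w = 0" "x \<noteq> 0"
    and "plane_angle x L \<le> \<theta>" "0 \<le> \<theta>" "\<theta> \<le> pi / 2"
  shows "norm z \<le> \<theta> * norm x"
proof -
  have "norm z \<le> sin \<theta> * norm x"
    using plane_angle_le_iff[OF assms(1-4,6,7)] assms(5) by simp
  also have "\<dots> \<le> \<theta> * norm x"
    using sin_x_le_x[OF assms(6)] by (simp add: mult_right_mono)
  finally show ?thesis .
qed

lemma diffs_orth_plane: "diffs (orth_plane L p) = orthogonal_comp (diffs L)"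
proof
  show "diffs (orth_plane L p) \<subseteq> orthogonal_comp (diffs L)"
  proof
    fix w assume "w \<in> diffs (orth_plane L p)"
    then obtain x y where "w = (x - p) - (y - p)" "x \<in> orth_plane L p" "y \<in> orth_plane L p"
      unfolding diffs_def by force
    have "d \<bullet> w = 0" if "d \<in> diffs L" for d
    proof -
      have "(x - p) \<bullet> d = 0" "(y - p) \<bullet> d = 0"
        using that \<open>x \<in> orth_plane L p\<close> \<open>y \<in> orth_plane L p\<close> unfolding orth_plane_def by auto
      then show ?thesis
        unfolding \<open>w = (x - p) - (y - p)\<close> by (simp only: inner_commute[of d] inner_diff_left)
    qed
    then show "w \<in> orthogonal_comp (diffs L)"
      by (simp add: orthogonal_comp_def orthogonal_def)
  qed
  show "orthogonal_comp (diffs L) \<subseteq> diffs (orth_plane L p)"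
  proof
    fix w assume "w \<in> orthogonal_comp (diffs L)"
    then have "p + w \<in> orth_plane L p" "p \<in> orth_plane L p"
      by (auto simp: orth_plane_def orthogonal_comp_def orthogonal_def inner_commute)
    then show "w \<in> diffs (orth_plane L p)"
      unfolding diffs_def by force
  qed
qed

lemma plane_angle_orth_plane_le:
  fixes x y z :: "'a::euclidean_space"
  assumes "x = y + z" "y \<in> diffs L" "\<forall>w\<in>diffs L. z \<bullet> w = 0" "x \<noteq> 0"
    and "norm y \<le> sin \<theta> * norm x" "0 \<le> \<theta>" "\<theta> \<le> pi / 2"
  shows "plane_angle x (orth_plane L p) \<le> \<theta>"
proof -
  have "z \<in> diffs (orth_plane L p)" "\<forall>w\<in>diffs (orth_plane L p). y \<bullet> w = 0"
    using assms(2,3)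
    by (auto simp: diffs_orth_plane orthogonal_comp_def orthogonal_def inner_commute)
  moreover have "x = z + y"
    using assms(1) by (simp only: add.commute)
  ultimately show ?thesis
    using plane_angle_le_iff[of x z y] assms(4-7) by blast
qed

lemma abs_inner_unit_normal_le:
  fixes x n :: "'a::euclidean_space"
  assumes "affine H" "H \<noteq> {}" "unit_normal n H"
    and "plane_angle x H \<le> \<theta>" "0 \<le> \<theta>" "\<theta> \<le> pi / 2"
  shows "\<bar>x \<bullet> n\<bar> \<le> \<theta> * norm x"
proof (cases "x = 0")
  case False
  obtain y z where dec: "x = y + z" "y \<in> diffs H" "\<forall>w\<in>diffs H. z \<bullet> w = 0"
    using orthogonal_decomp_diffs[OF assms(1,2)] .
  have "y \<bullet> n = 0"
    using dec(2) assms(3) unfolding unit_normal_def by (metis inner_commute)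
  then have "\<bar>x \<bullet> n\<bar> = \<bar>z \<bullet> n\<bar>"
    by (simp add: dec(1) inner_add_left)
  also have "\<dots> \<le> norm z"
    using Cauchy_Schwarz_ineq2[of z n] assms(3) by (simp add: unit_normal_def)
  also have "\<dots> \<le> \<theta> * norm x"
    using norm_orthogonal_component_le[OF dec False assms(4-6)] .
  finally show ?thesis .
qed simp

lemma diffs_hyperplane_slice:
  assumes "affine L" "b \<in> L"
  shows "diffs (L \<inter> {x. a \<bullet> x = a \<bullet> b}) = {w \<in> diffs L. a \<bullet> w = 0}"
proof
  show "diffs (L \<inter> {x. a \<bullet> x = a \<bullet> b}) \<subseteq> {w \<in> diffs L. a \<bullet> w = 0}"
    by (auto simp: diffs_def inner_diff_right)
  show "{w \<in> diffs L. a \<bullet> w = 0} \<subseteq> diffs (L \<inter> {x. a \<bullet> x = a \<bullet> b})"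
  proof clarify
    fix w assume "w \<in> diffs L" "a \<bullet> w = 0"
    then have "b + w \<in> L \<inter> {x. a \<bullet> x = a \<bullet> b}" "b \<in> L \<inter> {x. a \<bullet> x = a \<bullet> b}"
      using assms by (auto simp: diffs_affine inner_add_right)
    then show "w \<in> diffs (L \<inter> {x. a \<bullet> x = a \<bullet> b})"
      unfolding diffs_def by force
  qed
qed

lemma is_plane_hyperplane_slice:
  fixes L :: "'a::euclidean_space set"
  assumes "is_plane j L" "b \<in> L" "a \<in> diffs L" "a \<noteq> 0"
  shows "0 < j" "is_plane (j - 1) (L \<inter> {x. a \<bullet> x = a \<bullet> b})"
proof -
  have "affine L" "aff_dim L = int j"
    using assms(1) unfolding is_plane_def by auto
  have "b + a \<in> L"
    using assms(2,3) diffs_affine[OF \<open>affine L\<close> \<open>b \<in> L\<close>] by force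
  moreover have "a \<bullet> (b + a) \<noteq> a \<bullet> b"
    using \<open>a \<noteq> 0\<close> by (simp add: inner_add_right)
  ultimately have slice: "aff_dim (L \<inter> {x. a \<bullet> x = a \<bullet> b}) = int j - 1"
    using aff_dim_affine_Int_hyperplane[OF \<open>affine L\<close>, of a "a \<bullet> b"] \<open>b \<in> L\<close> \<open>aff_dim L = int j\<close>
    by (auto split: if_splits)
  moreover have "L \<inter> {x. a \<bullet> x = a \<bullet> b} \<noteq> {}"
    using \<open>b \<in> L\<close> by blast
  ultimately show "0 < j"
    by (metis aff_dim_negative_iff of_nat_0_less_iff zle_diff1_eq not_le)
  then show "is_plane (j - 1) (L \<inter> {x. a \<bullet> x = a \<bullet> b})"
    unfolding is_plane_def using slice \<open>affine L\<close> \<open>b \<in> L\<close>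
    by (auto intro: affine_hyperplane)
qed

lemma norm_tilted_component_le:
  fixes u v y z q r :: "'a::real_inner"
  assumes "u = y + z" "v = q + c *\<^sub>R y + r"
    and "y \<bullet> z = 0" "y \<bullet> q = 0" "y \<bullet> r = 0" "z \<bullet> q = 0"
    and "norm r \<le> t" "\<bar>u \<bullet> v\<bar> \<le> t * norm u" "s * norm u < norm y" "0 < s"
  shows "norm (c *\<^sub>R y + r) \<le> t * (1 + 2 / s)"
proof -
  have uv: "u \<bullet> v = c * (y \<bullet> y) + z \<bullet> r"
    using assms(1-6) by (simp add: inner_add_left inner_add_right inner_commute)
  have "norm u ^ 2 = norm y ^ 2 + norm z ^ 2"
    using assms(1,3) norm_add_Pythagorean[of y z] by (simp add: orthogonal_def)
  then have "norm z ^ 2 \<le> norm u ^ 2"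
    by simp
  then have "norm z \<le> norm u"
    by (rule power2_le_imp_le) simp
  have "0 \<le> s * norm u"
    using assms(10) by simp
  then have "y \<noteq> 0"
    using assms(9) by auto
  have "\<bar>c\<bar> * norm y * norm y = \<bar>u \<bullet> v - z \<bullet> r\<bar>"
    unfolding uv by (simp add: abs_mult dot_square_norm power2_eq_square)
  also have "\<dots> \<le> t * norm u + norm z * norm r"
    using assms(8) Cauchy_Schwarz_ineq2[of z r] by linarith
  also have "\<dots> \<le> 2 * t * norm u"
    using \<open>norm z \<le> norm u\<close> assms(7) mult_mono[of "norm z" "norm u" "norm r" t] by (simp add: mult.commute)
  also have "\<dots> \<le> 2 * t / s * norm y"
  proof -
    have "0 \<le> t"
      using assms(7) norm_ge_zero[of r] by linarith
    then have "t * (s * norm u) \<le> t * norm y"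
      using assms(9) by (intro mult_left_mono) auto
    then show ?thesis
      using assms(10) by (simp add: field_simps)
  qed
  finally have "\<bar>c\<bar> * norm y \<le> 2 * t / s"
    by (rule mult_right_le_imp_le) (use \<open>y \<noteq> 0\<close> in simp)
  then have "norm (c *\<^sub>R y + r) \<le> 2 * t / s + t"
    using norm_triangle_ineq[of "c *\<^sub>R y" r] assms(7) by simp
  then show ?thesis
    by (simp add: algebra_simps)
qed

lemma plane_angle_hyperplane_slice_le:
  fixes LB :: "'a::euclidean_space set"
  assumes LB: "affine LB" "b \<in> LB"
    and dec: "u = y + z" "y \<in> diffs LB" "\<forall>w\<in>diffs LB. z \<bullet> w = 0"
    and tilted: "s * norm u < norm y"
    and v: "norm v = 1" "plane_angle v LB \<le> \<beta> * \<theta>" "\<bar>u \<bullet> v\<bar> \<le> \<beta> * \<theta> * norm u"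
    and \<beta>: "0 < \<beta>" "8 * \<beta> \<le> s" "s \<le> 1" and \<theta>: "0 \<le> \<theta>" "\<theta> \<le> 1"
  shows "plane_angle v (LB \<inter> {x. y \<bullet> x = y \<bullet> b}) \<le> \<theta>"
proof -
  have "0 < s" "LB \<noteq> {}" "v \<noteq> 0"
    using \<beta> LB v(1) by auto
  have \<beta>\<theta>: "0 \<le> \<beta> * \<theta>" "\<beta> * \<theta> \<le> pi / 2"
    using \<beta> \<theta> pi_gt3 mult_mono[of \<beta> 1 \<theta> 1] by auto
  obtain pW r where vdec: "v = pW + r" "pW \<in> diffs LB" "\<forall>w\<in>diffs LB. r \<bullet> w = 0"
    using orthogonal_decomp_diffs[OF LB(1) \<open>LB \<noteq> {}\<close>] .
  have r: "norm r \<le> \<beta> * \<theta>"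
    using norm_orthogonal_component_le[OF vdec \<open>v \<noteq> 0\<close> v(2) \<beta>\<theta>] v(1) by simp
  define c where "c = (pW \<bullet> y) / (y \<bullet> y)"
  define q where "q = pW - c *\<^sub>R y"
  have "y \<bullet> q = 0"
    unfolding q_def c_def by (cases "y = 0") (simp_all add: inner_diff_right inner_commute)
  moreover have "q \<in> diffs LB"
    using subspace_diffs[OF LB(1) \<open>LB \<noteq> {}\<close>] vdec(2) dec(2)
    unfolding q_def by (simp add: subspace_diff subspace_scale)
  ultimately have q: "q \<in> diffs (LB \<inter> {x. y \<bullet> x = y \<bullet> b})"
    by (simp add: diffs_hyperplane_slice[OF LB])
  have orth: "\<forall>w\<in>diffs (LB \<inter> {x. y \<bullet> x = y \<bullet> b}). (c *\<^sub>R y + r) \<bullet> w = 0"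
    using vdec(3) by (simp add: diffs_hyperplane_slice[OF LB] inner_add_left)
  have "norm (c *\<^sub>R y + r) \<le> \<beta> * \<theta> * (1 + 2 / s)"
  proof (rule norm_tilted_component_le[OF dec(1) _ _ \<open>y \<bullet> q = 0\<close> _ _ r v(3) tilted \<open>0 < s\<close>])
    show "v = q + c *\<^sub>R y + r"
      using vdec(1) by (simp add: q_def)
    show "y \<bullet> z = 0" "y \<bullet> r = 0"
      using dec(2,3) vdec(3) by (metis inner_commute)+
    show "z \<bullet> q = 0"
      using dec(3) \<open>q \<in> diffs LB\<close> by blast
  qed
  also have "\<dots> = (\<beta> + 2 * \<beta> / s) * \<theta>"
    by (simp add: algebra_simps)
  also have "\<dots> \<le> (1 / 8 + 1 / 4) * \<theta>"
    using \<beta> \<open>0 < s\<close> \<theta>(1) by (intro mult_right_mono add_mono) (auto simp: divide_le_eq)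
  also have "\<dots> \<le> sin \<theta> * norm v"
    using half_le_sin[OF \<theta>] \<theta>(1) v(1) by simp
  finally show ?thesis
    using plane_angle_le_iff[of v q "c *\<^sub>R y + r"] q orth vdec(1) \<open>v \<noteq> 0\<close> \<theta> pi_gt3
    by (simp add: q_def)
qed

lemma flat_wrt_hyperplane_slice:
  fixes LB :: "'a::euclidean_space set"
  assumes flat: "flat_wrt j (\<beta> ^ j) V LB" and "b \<in> LB" and unit: "\<forall>v\<in>V. norm v = 1"
    and dec: "u = y + z" "y \<in> diffs LB" "\<forall>w\<in>diffs LB. z \<bullet> w = 0"
    and tilted: "s * norm u < norm y"
    and small: "\<forall>v\<in>V. \<bar>u \<bullet> v\<bar> \<le> \<beta> ^ j * norm u"
    and \<beta>: "0 < \<beta>" "8 * \<beta> \<le> s" "s \<le> 1"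
  shows "0 < j" "flat_wrt (j - 1) (\<beta> ^ (j - 1)) V (LB \<inter> {x. y \<bullet> x = y \<bullet> b})"
proof -
  have "is_plane j LB"
    using flat by (simp add: flat_wrt_def)
  have "0 \<le> s * norm u"
    using \<beta> by simp
  then have "y \<noteq> 0"
    using tilted by auto
  then have j: "0 < j" and slice: "is_plane (j - 1) (LB \<inter> {x. y \<bullet> x = y \<bullet> b})"
    using is_plane_hyperplane_slice[OF \<open>is_plane j LB\<close> \<open>b \<in> LB\<close> dec(2)] by auto
  then show "0 < j"
    by simp
  have "\<beta> ^ j = \<beta> * \<beta> ^ (j - 1)"
    using j by (metis Suc_diff_1 power_Suc)
  moreover have "0 \<le> \<beta> ^ (j - 1)" "\<beta> ^ (j - 1) \<le> 1"
    using \<beta> by (auto intro: power_le_one)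
  ultimately show "flat_wrt (j - 1) (\<beta> ^ (j - 1)) V (LB \<inter> {x. y \<bullet> x = y \<bullet> b})"
    using flat unit small slice \<beta> \<open>is_plane j LB\<close> \<open>b \<in> LB\<close>
    unfolding flat_wrt_def is_plane_def
    by (auto intro!: plane_angle_hyperplane_slice_le[OF _ _ dec tilted])
qed

lemma plane_angle_orth_plane_le_if_minimal_flat:
  fixes H :: "nat \<Rightarrow> 'a::euclidean_space set"
  assumes \<theta>: "0 \<le> \<theta>" "\<theta> \<le> pi / 2" and \<beta>: "0 < \<beta>" "8 * \<beta> \<le> sin \<theta>"
    and H: "\<forall>i<m. affine (H i) \<and> H i \<noteq> {}" and nv: "\<forall>i<m. unit_normal (nv i) (H i)"
    and flat: "flat_wrt j (\<beta> ^ j) (nv ` {..<m}) LB" and "b \<in> LB"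
    and minimal: "\<forall>j'<j. \<not> (\<exists>L. flat_wrt j' (\<beta> ^ j') (nv ` {..<m}) L \<and> b \<in> L)"
    and "p \<noteq> b"
    and close: "\<forall>i<m. plane_angle (b - p) (H i) \<le> \<beta> ^ DIM('a)"
  shows "plane_angle (b - p) (orth_plane LB b) \<le> \<theta>"
proof -
  define u where "u = b - p"
  have "u \<noteq> 0"
    using \<open>p \<noteq> b\<close> by (simp add: u_def)
  have LB: "affine LB" "LB \<noteq> {}" "aff_dim LB = int j"
    using flat by (auto simp: flat_wrt_def is_plane_def)
  obtain y z where dec: "u = y + z" "y \<in> diffs LB" "\<forall>w\<in>diffs LB. z \<bullet> w = 0"
    using orthogonal_decomp_diffs[OF LB(1,2)] .
  show ?thesis
  proof (cases "norm y \<le> sin \<theta> * norm u")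
    case True
    then show ?thesis
      using plane_angle_orth_plane_le[OF dec \<open>u \<noteq> 0\<close> True \<theta>] by (simp add: u_def)
  next
    case False
    have "\<beta> \<le> 1"
      using \<beta> sin_le_one[of \<theta>] by linarith
    have "j \<le> DIM('a)"
      using aff_dim_le_DIM[of LB] LB(3) by simp
    have "0 \<le> \<beta> ^ j" "\<beta> ^ j \<le> pi / 2"
      using \<beta> \<open>\<beta> \<le> 1\<close> pi_gt3 power_le_one[of \<beta> j] by auto
    have "\<beta> ^ DIM('a) \<le> \<beta> ^ j"
      using power_decreasing[OF \<open>j \<le> DIM('a)\<close>, of \<beta>] \<beta> \<open>\<beta> \<le> 1\<close> by simp
    then have small: "\<bar>u \<bullet> nv i\<bar> \<le> \<beta> ^ j * norm u" if "i < m" for i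
      using that H nv close \<open>0 \<le> \<beta> ^ j\<close> \<open>\<beta> ^ j \<le> pi / 2\<close>
      by (intro abs_inner_unit_normal_le[of "H i"]) (auto simp: u_def)
    have "\<forall>v\<in>nv ` {..<m}. norm v = 1"
      using nv by (auto simp: unit_normal_def)
    then have "0 < j" "flat_wrt (j - 1) (\<beta> ^ (j - 1)) (nv ` {..<m}) (LB \<inter> {x. y \<bullet> x = y \<bullet> b})"
      using flat_wrt_hyperplane_slice[OF flat \<open>b \<in> LB\<close> _ dec _ _ \<beta> sin_le_one] False small
      by auto
    moreover have "b \<in> LB \<inter> {x. y \<bullet> x = y \<bullet> b}"
      using \<open>b \<in> LB\<close> by simp
    ultimately show ?thesis
      using minimal diff_less[OF zero_less_one] by blast
  qed
qed

theorem lemma4: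
  fixes \<alpha> :: real
  assumes "\<alpha> > 0"
  shows "\<exists>\<beta>0>0. \<forall>\<beta>. 0 < \<beta> \<and> \<beta> \<le> \<beta>0 \<longrightarrow>
    (\<forall>(m::nat) (H::nat \<Rightarrow> 'a::euclidean_space set) (nv::nat \<Rightarrow> 'a) (b::'a) (j::nat) (LB::'a set) (p::'a).
      (\<forall>i<m. is_plane (DIM('a) - 1) (H i)) \<and>
      (\<forall>i<m. unit_normal (nv i) (H i)) \<and>
      (\<forall>i<m. b \<in> H i) \<and>
      flat_wrt j (\<beta> ^ j) (nv ` {..<m}) LB \<and> b \<in> LB \<and>
      (\<forall>j'<j. \<not> (\<exists>L. flat_wrt j' (\<beta> ^ j') (nv ` {..<m}) L \<and> b \<in> L)) \<and>
      p \<noteq> b \<and>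
      (\<forall>i<m. plane_angle (b - p) (H i) \<le> \<beta> ^ DIM('a))
      \<longrightarrow> plane_angle (b - p) (orth_plane LB b) \<le> \<alpha>)"
proof -
  define \<theta> where "\<theta> = min \<alpha> 1"
  have \<theta>: "0 < \<theta>" "\<theta> \<le> pi / 2" "\<theta> \<le> \<alpha>"
    using assms pi_gt3 by (auto simp: \<theta>_def)
  then have "0 < sin \<theta>"
    using pi_gt3 by (intro sin_gt_zero) auto
  show ?thesis
  proof (intro exI[of _ "sin \<theta> / 8"] conjI allI impI, goal_cases)
    case 1
    show ?case
      using \<open>0 < sin \<theta>\<close> by simp
  next
    case (2 \<beta> m H nv b j LB p)
    have "plane_angle (b - p) (orth_plane LB b) \<le> \<theta>"
      by (rule plane_angle_orth_plane_le_if_minimal_flat[of \<theta> \<beta> m H nv j LB b p])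
        (use 2 \<theta> in \<open>auto simp: is_plane_def\<close>)
    then show ?case
      using \<theta>(3) by linarith
  qed
qed

end
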